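(* Assume condition (G) holds. Let $\beta\in(0,1)$. Let $\widehat k\ge 0$ be any (possibly data-dependent) random variable and let $\widehat\pi=\widehat\pi_{\mathrm{RW}}(\widehat k)$ be any random element of $\Pi$ satisfying $$\widehat\pi\in\arg\max_{\pi\in\Pi}\bigl\{\widehat V(\pi)-\widehat k\,\widehat s(\pi)\bigr\}.$$ Then, with probability at least $1-2\beta-2r_n$, $$V_{\max}-V(\widehat\pi)\;\le\;\frac{\underline\sigma_{\Pi_0}}{\sqrt n}\bigl\{q_{1-\beta,\Pi_0}+\widehat k\bigr\}+\frac{\bar\sigma_\Pi}{\sqrt n}\bigl\{(q_{1-\beta,\Pi}-\widehat k)_+\bigr\},$$ where $x_+=\max\{x,0\}$.
   Context: Setting. $\Pi$ is a finite nonempty set of policies, $n$ is a positive integer (notional sample size). $V:\Pi\to\mathbb R$ is a deterministic (true) welfare function. On a probability space, $(\widehat V(\pi))_{\pi\in\Pi}$ are real random variables (welfare estimates) and $(\widehat s(\pi))_{\pi\in\Pi}$ are strictly positive random variables (estimated standard errors). Define the normalized estimation error $\widehat Z_\pi=(\widehat V(\pi)-V(\pi))/\widehat s(\pi)$. Let $(Z_\pi)_{\pi\in\Pi}$ be a centered Gaussian vector with $\mathrm{Var}(Z_\pi)=1$ for every $\pi$. Let $\mathcal A$ be the collection of rectangles in $\mathbb R^{\Pi}$, i.e. products $\prod_{\pi\in\Pi}I_\pi$ of (possibly unbounded) intervals. Condition (G): there is a constant $r_n\ge0$ such that $\bigl|\Pr((\widehat Z_\pi)_{\pi\in\Pi}\in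 A)-\Pr((Z_\pi)_{\pi\in\Pi}\in A)\bigr|\le r_n$ for all $A\in\mathcal A$. Quantiles: for a real random variable $X$ and $\tau\in(0,1)$, the $\tau$-quantile is $\inf\{x:\Pr(X\le x)\ge\tau\}$. For nonempty $K\subseteq\Pi$, $q_{\tau,K}$ denotes the $\tau$-quantile of $\max_{\pi\in K}Z_\pi$. Further notation: $V_{\max}=\max_{\pi\in\Pi}V(\pi)$, $\Pi_0=\{\pi\in\Pi:V(\pi)=V_{\max}\}$, $\bar\sigma_\Pi=\sqrt n\max_{\pi\in\Pi}\widehat s(\pi)$, $\underline\sigma_{\Pi_0}=\sqrt n\min_{\pi\in\Pi_0}\widehat s(\pi)$. *)

theory Defs
  imports "HOL-Probability.Probability"
begin

definition real_gaussian :: "'a measure \<Rightarrow> ('a \<Rightarrow> real) \<Rightarrow> bool" where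
  "real_gaussian N X \<longleftrightarrow> X \<in> borel_measurable N \<and>
     ((\<exists>\<mu> \<sigma>. \<sigma> > 0 \<and> distributed N lborel X (normal_density \<mu> \<sigma>)) \<or>
      (\<exists>c. AE x in N. X x = c))"

definition centered_unit_gaussian_vector ::
    "'a measure \<Rightarrow> 'p set \<Rightarrow> ('p \<Rightarrow> 'a \<Rightarrow> real) \<Rightarrow> bool" where
  "centered_unit_gaussian_vector N P Z \<longleftrightarrow>
     (\<forall>\<pi>\<in>P. Z \<pi> \<in> borel_measurable N) \<and>
     (\<forall>a :: 'p \<Rightarrow> real. real_gaussian N (\<lambda>\<omega>. \<Sum>\<pi>\<in>P. a \<pi> * Z \<pi> \<omega>)) \<and>
     (\<forall>\<pi>\<in>P. integrable N (Z \<pi>) \<and> integral\<^sup>L N (Z \<pi>) = 0) \<and>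
     (\<forall>\<pi>\<in>P. integrable N (\<lambda>\<omega>. (Z \<pi> \<omega>)\<^sup>2) \<and> integral\<^sup>L N (\<lambda>\<omega>. (Z \<pi> \<omega>)\<^sup>2) = 1)"

definition quantile :: "'a measure \<Rightarrow> ('a \<Rightarrow> real) \<Rightarrow> real \<Rightarrow> real" where
  "quantile N X \<tau> = Inf {x. measure N {\<omega>\<in>space N. X \<omega> \<le> x} \<ge> \<tau>}"

definition qmax :: "'a measure \<Rightarrow> ('p \<Rightarrow> 'a \<Rightarrow> real) \<Rightarrow> real \<Rightarrow> 'p set \<Rightarrow> real" where
  "qmax N Z \<tau> K = quantile N (\<lambda>\<omega>. Max ((\<lambda>\<pi>. Z \<pi> \<omega>) ` K)) \<tau>"

definition condition_G ::
    "'a measure \<Rightarrow> ('p \<Rightarrow> 'a \<Rightarrow> real) \<Rightarrow> 'b measure \<Rightarrow> ('p \<Rightarrow> 'b \<Rightarrow> real) \<Rightarrow> 'p set \<Rightarrow> real \<Rightarrow> bool" where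
  "condition_G M Zhat N Z P r \<longleftrightarrow>
     (\<forall>I :: 'p \<Rightarrow> real set. (\<forall>\<pi>\<in>P. is_interval (I \<pi>)) \<longrightarrow>
        \<bar>measure M {\<omega>\<in>space M. \<forall>\<pi>\<in>P. Zhat \<pi> \<omega> \<in> I \<pi>}
         - measure N {\<omega>\<in>space N. \<forall>\<pi>\<in>P. Z \<pi> \<omega> \<in> I \<pi>}\<bar> \<le> r)"

end

theory Submission
  imports Defs
begin

(* On the event where every normalized error Zhat \<pi> is at most q(1 - \<beta>, \<Pi>) and every optimal
   policy has Zhat \<pi> \<ge> -q(1 - \<beta>, \<Pi>\<^sub>0), comparing the penalized criterion at the chosen policy
   and at the optimal policy with the smallest standard error gives the regret bound deterministically.
   Both events are rectangles in the normalized errors. Under the Gaussian vector Z the first has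
   probability at least 1 - \<beta> by definition of the quantile, and so has the second after reflecting
   Z, because a centered Gaussian vector is symmetric; condition (G) transfers each bound with an
   error r, and a union bound finishes the proof.
   Symmetry of Z is derived from that of its one-dimensional linear combinations: equal joint
   characteristic functions force equal probabilities of rectangles, by Levy's uniqueness theorem
   applied to suitably weighted laws of one coordinate and induction on the number of coordinates. *)

lemma iexp_eq_cos_sin: "iexp v = complex_of_real (cos v) + \<i> * complex_of_real (sin v)"
  by (simp add: cos_of_real exp_Euler sin_of_real)

lemma iexp_add: "iexp (u + v) = iexp u * iexp v"
  by (simp add: distrib_left exp_add)

(* The coefficients 0, 1, -1 of v are kept explicit so that, after integration, every term is a
   value of the joint characteristic function of two random variables. *)
lemma one_plus_cos_scaleR_iexp:
  "(1 + cos v) *\<^sub>R iexp u = iexp (u + 0 * v) + (iexp (u + 1 * v) + iexp (u + (-1) * v)) / 2"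
proof -
  have cos: "complex_of_real (cos v) = (iexp v + iexp (-v)) / 2"
    using iexp_eq_cos_sin[of v] iexp_eq_cos_sin[of "-v"] by simp
  have "complex_of_real (cos v) * iexp u = (iexp (u + v) + iexp (u - v)) / 2"
    unfolding diff_conv_add_uminus iexp_add cos by (simp add: algebra_simps)
  then show ?thesis by (simp add: scaleR_conv_of_real distrib_right)
qed

lemma one_plus_sin_scaleR_iexp:
  "(1 + sin v) *\<^sub>R iexp u = iexp (u + 0 * v) + (iexp (u + 1 * v) - iexp (u + (-1) * v)) / (2 * \<i>)"
proof -
  have sin: "complex_of_real (sin v) = (iexp v - iexp (-v)) / (2 * \<i>)"
    using iexp_eq_cos_sin[of v] iexp_eq_cos_sin[of "-v"] by (simp add: field_simps)
  have "complex_of_real (sin v) * iexp u = (iexp (u + v) - iexp (u - v)) / (2 * \<i>)"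
    unfolding diff_conv_add_uminus iexp_add sin by (simp add: algebra_simps)
  then show ?thesis by (simp add: scaleR_conv_of_real distrib_right)
qed

lemma integrable_iexp_finite_measure:
  assumes "finite_measure M" and "f \<in> borel_measurable M"
  shows "integrable M (\<lambda>\<omega>. iexp (f \<omega>))"
  using assms by (intro finite_measure.integrable_const_bound[where B=1]) auto

lemma integral_one_plus_cos_scaleR_iexp:
  assumes M: "finite_measure M" and [measurable]: "U \<in> borel_measurable M" "V \<in> borel_measurable M"
  shows "(\<integral>\<omega>. (1 + cos (V \<omega>)) *\<^sub>R iexp (s * U \<omega>) \<partial>M) =
     (\<integral>\<omega>. iexp (s * U \<omega> + 0 * V \<omega>) \<partial>M) + ((\<integral>\<omega>. iexp (s * U \<omega> + 1 * V \<omega>) \<partial>M)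
       + (\<integral>\<omega>. iexp (s * U \<omega> + (-1) * V \<omega>) \<partial>M)) / 2"
proof -
  have int: "integrable M (\<lambda>\<omega>. iexp (s * U \<omega> + t * V \<omega>))" for t
    by (rule integrable_iexp_finite_measure[OF M]) simp
  show ?thesis
    unfolding one_plus_cos_scaleR_iexp
    by (simp only: Bochner_Integration.integral_add integral_divide_zero int
        integrable_divide Bochner_Integration.integrable_add)
qed

lemma integral_one_plus_sin_scaleR_iexp:
  assumes M: "finite_measure M" and [measurable]: "U \<in> borel_measurable M" "V \<in> borel_measurable M"
  shows "(\<integral>\<omega>. (1 + sin (V \<omega>)) *\<^sub>R iexp (s * U \<omega>) \<partial>M) =
     (\<integral>\<omega>. iexp (s * U \<omega> + 0 * V \<omega>) \<partial>M) + ((\<integral>\<omega>. iexp (s * U \<omega> + 1 * V \<omega>) \<partial>M)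
       - (\<integral>\<omega>. iexp (s * U \<omega> + (-1) * V \<omega>) \<partial>M)) / (2 * \<i>)"
proof -
  have int: "integrable M (\<lambda>\<omega>. iexp (s * U \<omega> + t * V \<omega>))" for t
    by (rule integrable_iexp_finite_measure[OF M]) simp
  show ?thesis
    unfolding one_plus_sin_scaleR_iexp
    by (simp only: Bochner_Integration.integral_add Bochner_Integration.integral_diff
        integral_divide_zero int integrable_divide Bochner_Integration.integrable_add
        Bochner_Integration.integrable_diff)
qed

lemma integral_indicator_scaleR_iexp:
  assumes M: "finite_measure M" and [measurable]: "U \<in> borel_measurable M" "V \<in> borel_measurable M"
    and B[measurable]: "B \<in> sets borel"
  shows "(\<integral>\<omega>. indicator B (U \<omega>) *\<^sub>R iexp (V \<omega>) \<partial>M) =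
      complex_of_real ((\<integral>\<omega>. (1 + cos (V \<omega>)) * indicator B (U \<omega>) \<partial>M) - (\<integral>\<omega>. indicator B (U \<omega>) \<partial>M))
    + \<i> * complex_of_real ((\<integral>\<omega>. (1 + sin (V \<omega>)) * indicator B (U \<omega>) \<partial>M) - (\<integral>\<omega>. indicator B (U \<omega>) \<partial>M))"
proof -
  have bounded: "integrable M h" if "h \<in> borel_measurable M" "\<forall>\<omega>. \<bar>h \<omega>\<bar> \<le> 2" for h :: "_ \<Rightarrow> real"
    using that by (intro finite_measure.integrable_const_bound[OF M, where B=2]) auto
  have int: "integrable M (\<lambda>\<omega>. (1 + c (V \<omega>)) * indicator B (U \<omega>))"
    if [measurable]: "c \<in> borel_measurable borel" and c: "\<forall>x. \<bar>c x\<bar> \<le> 1" for c :: "real \<Rightarrow> real"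
  proof (intro bounded allI)
    fix \<omega>
    show "\<bar>(1 + c (V \<omega>)) * indicator B (U \<omega>)\<bar> \<le> 2"
      using c[rule_format, of "V \<omega>"] by (auto simp: indicator_def)
  qed simp
  have int_cos: "integrable M (\<lambda>\<omega>. (1 + cos (V \<omega>)) * indicator B (U \<omega>))"
    and int_sin: "integrable M (\<lambda>\<omega>. (1 + sin (V \<omega>)) * indicator B (U \<omega>))"
    and int_one: "integrable M (\<lambda>\<omega>. indicator B (U \<omega>) :: real)"
    using int[of cos] int[of sin] int[of "\<lambda>_. 0"] by auto
  have pointwise: "indicator B u *\<^sub>R iexp v
      = complex_of_real ((1 + cos v) * indicator B u - indicator B u)
      + \<i> * complex_of_real ((1 + sin v) * indicator B u - indicator B u)" for u v
    by (auto simp: iexp_eq_cos_sin scaleR_conv_of_real algebra_simps indicator_def)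
  have re_im: "(\<integral>\<omega>. complex_of_real (f \<omega>) + \<i> * complex_of_real (g \<omega>) \<partial>M)
      = complex_of_real (integral\<^sup>L M f) + \<i> * complex_of_real (integral\<^sup>L M g)"
    if "integrable M f" "integrable M g" for f g
    using that by (simp only: Bochner_Integration.integral_add integrable_of_real
        integrable_mult_right integral_mult_right_zero integral_complex_of_real)
  show ?thesis
    unfolding pointwise
    using int_cos int_sin int_one
    by (simp only: re_im Bochner_Integration.integral_diff Bochner_Integration.integrable_diff)
qed

lemma real_distribution_distr_density:
  assumes M: "finite_measure M" and [measurable]: "U \<in> borel_measurable M" "w \<in> borel_measurable M"
    and w: "\<forall>\<omega>\<in>space M. 0 \<le> w \<omega> \<and> w \<omega> \<le> C" and m: "integral\<^sup>L M w > 0"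
  shows "real_distribution (distr (density M (\<lambda>\<omega>. ennreal (w \<omega> / integral\<^sup>L M w))) borel U)"
proof -
  have "integrable M w"
    using w by (intro finite_measure.integrable_const_bound[OF M, where B=C]) auto
  then have "emeasure (density M (\<lambda>\<omega>. ennreal (w \<omega> / integral\<^sup>L M w))) (space M) = ennreal (\<integral>\<omega>. w \<omega> / integral\<^sup>L M w \<partial>M)"
    using w m by (simp add: emeasure_density nn_integral_eq_integral)
  also have "\<dots> = 1" using m by simp
  finally have "prob_space (density M (\<lambda>\<omega>. ennreal (w \<omega> / integral\<^sup>L M w)))"
    by (intro prob_spaceI) simp
  then show ?thesis by (rule prob_space.real_distribution_distr) simp
qed

lemma integral_distr_density_scaleR:
  fixes g :: "real \<Rightarrow> 'c::{banach, second_countable_topology}"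
  assumes [measurable]: "U \<in> borel_measurable M" "w \<in> borel_measurable M" "g \<in> borel_measurable borel"
    and "\<forall>\<omega>\<in>space M. 0 \<le> w \<omega>"
  shows "integral\<^sup>L (distr (density M w) borel U) g = (\<integral>\<omega>. w \<omega> *\<^sub>R g (U \<omega>) \<partial>M)"
  using assms(4) by (subst integral_distr) (auto simp: integral_density)

lemma integral_weighted_eq_of_char_eq:
  fixes M1 :: "'a measure" and M2 :: "'b measure" and f :: "real \<Rightarrow> real"
  assumes M1: "finite_measure M1" and M2: "finite_measure M2"
    and [measurable]: "U1 \<in> borel_measurable M1" "U2 \<in> borel_measurable M2"
      "w1 \<in> borel_measurable M1" "w2 \<in> borel_measurable M2" "f \<in> borel_measurable borel"
    and w1: "\<forall>\<omega>\<in>space M1. 0 \<le> w1 \<omega> \<and> w1 \<omega> \<le> C"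
    and w2: "\<forall>\<omega>\<in>space M2. 0 \<le> w2 \<omega> \<and> w2 \<omega> \<le> C"
    and eq: "\<forall>s. (\<integral>\<omega>. w1 \<omega> *\<^sub>R iexp (s * U1 \<omega>) \<partial>M1) = (\<integral>\<omega>. w2 \<omega> *\<^sub>R iexp (s * U2 \<omega>) \<partial>M2)"
  shows "(\<integral>\<omega>. w1 \<omega> * f (U1 \<omega>) \<partial>M1) = (\<integral>\<omega>. w2 \<omega> * f (U2 \<omega>) \<partial>M2)"
proof -
  define m where "m = integral\<^sup>L M1 w1"
  have "complex_of_real (integral\<^sup>L M1 w1) = complex_of_real (integral\<^sup>L M2 w2)"
    using eq[rule_format, of 0] by (simp add: scaleR_conv_of_real)
  then have m2: "integral\<^sup>L M2 w2 = m" unfolding m_def by simp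
  have "m \<ge> 0" unfolding m_def using w1 by (intro integral_nonneg_AE) auto
  then consider "m = 0" | "m > 0" by linarith
  then show ?thesis
  proof cases
    case 1
    have zero: "(\<integral>\<omega>. w \<omega> * f (U \<omega>) \<partial>M) = 0"
      if "finite_measure M" and [measurable]: "w \<in> borel_measurable M" "U \<in> borel_measurable M"
        and w: "\<forall>\<omega>\<in>space M. 0 \<le> w \<omega> \<and> w \<omega> \<le> C" and "integral\<^sup>L M w = 0"
      for M :: "'c measure" and w U
    proof -
      have "integrable M w"
        using w by (intro finite_measure.integrable_const_bound[OF \<open>finite_measure M\<close>, where B=C]) auto
      then have "AE \<omega> in M. w \<omega> = 0"
        using integral_nonneg_eq_0_iff_AE w \<open>integral\<^sup>L M w = 0\<close> by auto
      then show ?thesis by (subst integral_cong_AE[where g="\<lambda>_. 0"]) auto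
    qed
    show ?thesis
      using zero[OF M1 _ _ w1] zero[OF M2 _ _ w2] 1 m2 unfolding m_def by simp
  next
    case 2
    \<comment> \<open>Normalized, the two weighted laws of the U's are probability distributions on the line with
        the same characteristic function, hence equal by Levy's uniqueness theorem.\<close>
    define \<mu>1 where "\<mu>1 = distr (density M1 (\<lambda>\<omega>. ennreal (w1 \<omega> / m))) borel U1"
    define \<mu>2 where "\<mu>2 = distr (density M2 (\<lambda>\<omega>. ennreal (w2 \<omega> / m))) borel U2"
    have integral_\<mu>1: "integral\<^sup>L \<mu>1 g = (1 / m) *\<^sub>R (\<integral>\<omega>. w1 \<omega> *\<^sub>R g (U1 \<omega>) \<partial>M1)"
      if "g \<in> borel_measurable borel" for g :: "real \<Rightarrow> 'c::{banach, second_countable_topology}"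
      unfolding \<mu>1_def using that w1 2
      by (subst integral_distr_density_scaleR) (auto simp flip: integral_scaleR_right)
    have integral_\<mu>2: "integral\<^sup>L \<mu>2 g = (1 / m) *\<^sub>R (\<integral>\<omega>. w2 \<omega> *\<^sub>R g (U2 \<omega>) \<partial>M2)"
      if "g \<in> borel_measurable borel" for g :: "real \<Rightarrow> 'c::{banach, second_countable_topology}"
      unfolding \<mu>2_def using that w2 2
      by (subst integral_distr_density_scaleR) (auto simp flip: integral_scaleR_right)
    have "char \<mu>1 = char \<mu>2"
      unfolding char_def using eq by (simp add: integral_\<mu>1 integral_\<mu>2)
    moreover have "real_distribution \<mu>1" "real_distribution \<mu>2"
      unfolding \<mu>1_def \<mu>2_def m_def
      using real_distribution_distr_density[OF M1 _ _ w1] real_distribution_distr_density[OF M2 _ _ w2]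
        2 m2 unfolding m_def by auto
    ultimately have "\<mu>1 = \<mu>2" by (intro Levy_uniqueness)
    then show ?thesis
      using integral_\<mu>1[of f] integral_\<mu>2[of f] 2 by simp
  qed
qed

lemma integral_indicator_iexp_eq_of_joint_char_eq:
  fixes M1 :: "'a measure" and M2 :: "'b measure"
  assumes M1: "finite_measure M1" and M2: "finite_measure M2"
    and meas[measurable]: "U1 \<in> borel_measurable M1" "U2 \<in> borel_measurable M2"
      "V1 \<in> borel_measurable M1" "V2 \<in> borel_measurable M2"
    and eq: "\<forall>s t. (\<integral>\<omega>. iexp (s * U1 \<omega> + t * V1 \<omega>) \<partial>M1) = (\<integral>\<omega>. iexp (s * U2 \<omega> + t * V2 \<omega>) \<partial>M2)"
    and B[measurable]: "B \<in> sets borel"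
  shows "(\<integral>\<omega>. indicator B (U1 \<omega>) *\<^sub>R iexp (V1 \<omega>) \<partial>M1) = (\<integral>\<omega>. indicator B (U2 \<omega>) *\<^sub>R iexp (V2 \<omega>) \<partial>M2)"
proof -
  \<comment> \<open>Real and imaginary part of the left-hand side are differences of integrals of the indicator
      against the nonnegative weights 1 + cos V and 1 + sin V, whose Fourier transforms in U are
      combinations of joint characteristic function values.\<close>
  have weights_bounded: "0 \<le> 1 + cos x \<and> 1 + cos x \<le> 2" "0 \<le> 1 + sin x \<and> 1 + sin x \<le> 2" for x :: real
    by (smt (verit) cos_ge_minus_one cos_le_one sin_ge_minus_one sin_le_one)+
  have "(\<integral>\<omega>. (1::real) * indicator B (U1 \<omega>) \<partial>M1) = (\<integral>\<omega>. 1 * indicator B (U2 \<omega>) \<partial>M2)"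
    using eq[rule_format, of _ 0]
    by (intro integral_weighted_eq_of_char_eq[OF M1 M2, where C=2 and ?U1.0=U1 and ?U2.0=U2 and f="indicator B"]) auto
  moreover have "(\<integral>\<omega>. (1 + cos (V1 \<omega>)) * indicator B (U1 \<omega>) \<partial>M1)
      = (\<integral>\<omega>. (1 + cos (V2 \<omega>)) * indicator B (U2 \<omega>) \<partial>M2)"
  proof (rule integral_weighted_eq_of_char_eq[OF M1 M2, where C=2 and ?U1.0=U1 and ?U2.0=U2 and f="indicator B"])
    show "\<forall>s. (\<integral>\<omega>. (1 + cos (V1 \<omega>)) *\<^sub>R iexp (s * U1 \<omega>) \<partial>M1)
        = (\<integral>\<omega>. (1 + cos (V2 \<omega>)) *\<^sub>R iexp (s * U2 \<omega>) \<partial>M2)"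
      by (simp only: integral_one_plus_cos_scaleR_iexp[OF M1 meas(1,3)]
          integral_one_plus_cos_scaleR_iexp[OF M2 meas(2,4)] eq[rule_format] simp_thms)
  qed (use weights_bounded in auto)
  moreover have "(\<integral>\<omega>. (1 + sin (V1 \<omega>)) * indicator B (U1 \<omega>) \<partial>M1)
      = (\<integral>\<omega>. (1 + sin (V2 \<omega>)) * indicator B (U2 \<omega>) \<partial>M2)"
  proof (rule integral_weighted_eq_of_char_eq[OF M1 M2, where C=2 and ?U1.0=U1 and ?U2.0=U2 and f="indicator B"])
    show "\<forall>s. (\<integral>\<omega>. (1 + sin (V1 \<omega>)) *\<^sub>R iexp (s * U1 \<omega>) \<partial>M1)
        = (\<integral>\<omega>. (1 + sin (V2 \<omega>)) *\<^sub>R iexp (s * U2 \<omega>) \<partial>M2)"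
      by (simp only: integral_one_plus_sin_scaleR_iexp[OF M1 meas(1,3)]
          integral_one_plus_sin_scaleR_iexp[OF M2 meas(2,4)] eq[rule_format] simp_thms)
  qed (use weights_bounded in auto)
  ultimately show ?thesis
    unfolding integral_indicator_scaleR_iexp[OF M1 meas(1,3) B]
      integral_indicator_scaleR_iexp[OF M2 meas(2,4) B]
    by simp
qed

lemma integral_restrict_space_preimage:
  fixes f :: "'a \<Rightarrow> 'c::{banach, second_countable_topology}"
  assumes [measurable]: "X \<in> borel_measurable M" "I \<in> sets borel"
  shows "(\<integral>\<omega>. f \<omega> \<partial>restrict_space M {\<omega>\<in>space M. X \<omega> \<in> I}) = (\<integral>\<omega>. indicator I (X \<omega>) *\<^sub>R f \<omega> \<partial>M)"
proof -
  have "{\<omega>\<in>space M. X \<omega> \<in> I} \<inter> space M \<in> sets M" by measurable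
  then show ?thesis
    by (subst integral_restrict_space) (auto intro!: Bochner_Integration.integral_cong simp: indicator_def)
qed

lemma measure_restrict_space_preimage:
  assumes [measurable]: "X \<in> borel_measurable M" "I \<in> sets borel"
  shows "measure (restrict_space M {\<omega>\<in>space M. X \<omega> \<in> I}) {\<omega>\<in>space (restrict_space M {\<omega>\<in>space M. X \<omega> \<in> I}). P \<omega>}
    = measure M {\<omega>\<in>space M. X \<omega> \<in> I \<and> P \<omega>}"
proof -
  have "{\<omega>\<in>space M. X \<omega> \<in> I} \<inter> space M \<in> sets M" by measurable
  then show ?thesis
    by (subst measure_restrict_space) (auto simp: space_restrict_space intro!: arg_cong[where f="measure M"])
qed

lemma measure_rectangle_eq_of_char_eq:
  fixes M1 :: "'a measure" and M2 :: "'b measure" and S :: "'p set"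
  assumes "finite S" and "finite_measure M1" and "finite_measure M2"
    and "\<forall>\<pi>\<in>S. X \<pi> \<in> borel_measurable M1" and "\<forall>\<pi>\<in>S. Y \<pi> \<in> borel_measurable M2"
    and "\<forall>a. (\<integral>\<omega>. iexp (\<Sum>\<pi>\<in>S. a \<pi> * X \<pi> \<omega>) \<partial>M1) = (\<integral>\<omega>. iexp (\<Sum>\<pi>\<in>S. a \<pi> * Y \<pi> \<omega>) \<partial>M2)"
    and "\<forall>\<pi>\<in>S. I \<pi> \<in> sets borel"
  shows "measure M1 {\<omega>\<in>space M1. \<forall>\<pi>\<in>S. X \<pi> \<omega> \<in> I \<pi>} = measure M2 {\<omega>\<in>space M2. \<forall>\<pi>\<in>S. Y \<pi> \<omega> \<in> I \<pi>}"
  using assms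
proof (induction S arbitrary: M1 M2 rule: finite_induct)
  case empty
  then have "complex_of_real (measure M1 (space M1)) = complex_of_real (measure M2 (space M2))"
    by simp
  then show ?case by simp
next
  case (insert p S)
  note M1 = insert.prems(1) and M2 = insert.prems(2) and eq = insert.prems(5)
  have [measurable]: "X \<pi> \<in> borel_measurable M1" "Y \<pi> \<in> borel_measurable M2" "I \<pi> \<in> sets borel"
    if "\<pi> \<in> insert p S" for \<pi>
    using insert.prems that by auto
  define R1 where "R1 = restrict_space M1 {\<omega>\<in>space M1. X p \<omega> \<in> I p}"
  define R2 where "R2 = restrict_space M2 {\<omega>\<in>space M2. Y p \<omega> \<in> I p}"
  \<comment> \<open>Restricting to the slab of the new coordinate keeps the characteristic functions of the
      remaining coordinates equal, by the two-dimensional case.\<close>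
  have "(\<integral>\<omega>. iexp (\<Sum>\<pi>\<in>S. a \<pi> * X \<pi> \<omega>) \<partial>R1) = (\<integral>\<omega>. iexp (\<Sum>\<pi>\<in>S. a \<pi> * Y \<pi> \<omega>) \<partial>R2)" for a
  proof -
    have joint: "(\<integral>\<omega>. iexp (s * X p \<omega> + t * (\<Sum>\<pi>\<in>S. a \<pi> * X \<pi> \<omega>)) \<partial>M1) =
          (\<integral>\<omega>. iexp (s * Y p \<omega> + t * (\<Sum>\<pi>\<in>S. a \<pi> * Y \<pi> \<omega>)) \<partial>M2)" for s t
    proof -
      define b where "b = (\<lambda>\<pi>. t * a \<pi>)(p := s)"
      have sum_b: "(\<Sum>\<pi>\<in>insert p S. b \<pi> * W \<pi> \<omega>) = s * W p \<omega> + t * (\<Sum>\<pi>\<in>S. a \<pi> * W \<pi> \<omega>)"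
        for W :: "'p \<Rightarrow> 'c \<Rightarrow> real" and \<omega>
        using insert.hyps by (auto simp: b_def sum_distrib_left intro!: sum.cong)
      show ?thesis using eq[rule_format, of b] unfolding sum_b .
    qed
    have "(\<integral>\<omega>. iexp (\<Sum>\<pi>\<in>S. a \<pi> * X \<pi> \<omega>) \<partial>R1)
        = (\<integral>\<omega>. indicator (I p) (X p \<omega>) *\<^sub>R iexp (\<Sum>\<pi>\<in>S. a \<pi> * X \<pi> \<omega>) \<partial>M1)"
      unfolding R1_def by (rule integral_restrict_space_preimage) auto
    also have "\<dots> = (\<integral>\<omega>. indicator (I p) (Y p \<omega>) *\<^sub>R iexp (\<Sum>\<pi>\<in>S. a \<pi> * Y \<pi> \<omega>) \<partial>M2)"
      by (rule integral_indicator_iexp_eq_of_joint_char_eq[OF M1 M2]) (use joint in auto)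
    also have "\<dots> = (\<integral>\<omega>. iexp (\<Sum>\<pi>\<in>S. a \<pi> * Y \<pi> \<omega>) \<partial>R2)"
      unfolding R2_def by (rule integral_restrict_space_preimage[symmetric]) auto
    finally show ?thesis .
  qed
  moreover have "finite_measure R1" "finite_measure R2"
    unfolding R1_def R2_def using M1 M2 by (auto intro: finite_measure_restrict_space)
  ultimately have "measure R1 {\<omega>\<in>space R1. \<forall>\<pi>\<in>S. X \<pi> \<omega> \<in> I \<pi>} = measure R2 {\<omega>\<in>space R2. \<forall>\<pi>\<in>S. Y \<pi> \<omega> \<in> I \<pi>}"
    using insert.prems unfolding R1_def R2_def
    by (intro insert.IH) (auto intro!: measurable_restrict_space1)
  moreover have "measure R1 {\<omega>\<in>space R1. \<forall>\<pi>\<in>S. X \<pi> \<omega> \<in> I \<pi>}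
      = measure M1 {\<omega>\<in>space M1. X p \<omega> \<in> I p \<and> (\<forall>\<pi>\<in>S. X \<pi> \<omega> \<in> I \<pi>)}"
    unfolding R1_def by (rule measure_restrict_space_preimage) auto
  moreover have "measure R2 {\<omega>\<in>space R2. \<forall>\<pi>\<in>S. Y \<pi> \<omega> \<in> I \<pi>}
      = measure M2 {\<omega>\<in>space M2. Y p \<omega> \<in> I p \<and> (\<forall>\<pi>\<in>S. Y \<pi> \<omega> \<in> I \<pi>)}"
    unfolding R2_def by (rule measure_restrict_space_preimage) auto
  ultimately show ?case by simp
qed

lemma integral_sin_centered_real_gaussian:
  assumes N: "prob_space N" and W: "real_gaussian N W" and mean: "integral\<^sup>L N W = 0"
  shows "(\<integral>\<omega>. sin (W \<omega>) \<partial>N) = 0"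
proof -
  have [measurable]: "W \<in> borel_measurable N" using W unfolding real_gaussian_def by simp
  from W consider (normal_dist) \<mu> \<sigma> where "\<sigma> > 0" "distributed N lborel W (normal_density \<mu> \<sigma>)"
    | (degenerate) c where "AE \<omega> in N. W \<omega> = c"
    unfolding real_gaussian_def by blast
  then show ?thesis
  proof cases
    case normal_dist
    have "\<mu> = 0"
      using prob_space.normal_distributed_expectation[OF N normal_dist] mean by simp
    define f where "f x = normal_density 0 \<sigma> x * sin x" for x
    have "(\<integral>x. f x \<partial>lborel) = \<bar>-1\<bar> *\<^sub>R (\<integral>x. f (0 + (-1) * x) \<partial>lborel)"
      by (rule lborel_integral_real_affine) simp
    also have "\<dots> = - (\<integral>x. f x \<partial>lborel)"
      by (simp add: f_def normal_density_def)
    finally have "(\<integral>x. f x \<partial>lborel) = 0" by simp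
    then show ?thesis
      using distributed_integral[OF normal_dist(2), of sin] \<open>\<mu> = 0\<close> by (simp add: f_def)
  next
    case degenerate
    have "integral\<^sup>L N W = c"
      using integral_cong_AE[of W N "\<lambda>_. c"] degenerate prob_space.prob_space[OF N] by simp
    then have "AE \<omega> in N. sin (W \<omega>) = 0" using degenerate mean by auto
    then show ?thesis by (subst integral_cong_AE[where g="\<lambda>_. 0"]) auto
  qed
qed

lemma integral_iexp_uminus_centered_real_gaussian:
  assumes N: "prob_space N" and W: "real_gaussian N W" and mean: "integral\<^sup>L N W = 0"
  shows "(\<integral>\<omega>. iexp (- W \<omega>) \<partial>N) = (\<integral>\<omega>. iexp (W \<omega>) \<partial>N)"
proof -
  have [measurable]: "W \<in> borel_measurable N" using W unfolding real_gaussian_def by simp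
  have bounded: "integrable N (\<lambda>\<omega>. f (W \<omega>))"
    if [measurable]: "f \<in> borel_measurable borel" and "\<forall>x. \<bar>f x\<bar> \<le> 1" for f :: "real \<Rightarrow> real"
    using that N by (intro finite_measure.integrable_const_bound[where B=1]) (auto simp: prob_space_def)
  have cos: "integrable N (\<lambda>\<omega>. cos (W \<omega>))" and sin: "integrable N (\<lambda>\<omega>. sin (W \<omega>))"
    by (auto intro!: bounded)
  have sin0: "(\<integral>\<omega>. sin (W \<omega>) \<partial>N) = 0"
    by (rule integral_sin_centered_real_gaussian[OF N W mean])
  have "(\<integral>\<omega>. iexp (c * W \<omega>) \<partial>N) = complex_of_real (\<integral>\<omega>. cos (W \<omega>) \<partial>N)"
    if "c = 1 \<or> c = -1" for c
  proof -
    have "iexp (c * W \<omega>) = complex_of_real (cos (W \<omega>)) + \<i> * complex_of_real (c * sin (W \<omega>))" for \<omega>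
      using that iexp_eq_cos_sin[of "W \<omega>"] iexp_eq_cos_sin[of "- W \<omega>"] by auto
    then have "(\<integral>\<omega>. iexp (c * W \<omega>) \<partial>N)
        = complex_of_real (\<integral>\<omega>. cos (W \<omega>) \<partial>N) + \<i> * complex_of_real (c * (\<integral>\<omega>. sin (W \<omega>) \<partial>N))"
      using cos sin by (simp del: of_real_mult add: integrable_of_real integrable_mult_right)
    then show ?thesis using sin0 by simp
  qed
  from this[of "-1"] this[of 1] show ?thesis by simp
qed

lemma measure_rectangle_uminus_centered_unit_gaussian_vector:
  assumes N: "prob_space N" and Z: "centered_unit_gaussian_vector N P Z"
    and P: "finite P" and K: "K \<subseteq> P" and I: "\<forall>\<pi>\<in>K. I \<pi> \<in> sets borel"
  shows "measure N {\<omega>\<in>space N. \<forall>\<pi>\<in>K. - Z \<pi> \<omega> \<in> I \<pi>} = measure N {\<omega>\<in>space N. \<forall>\<pi>\<in>K. Z \<pi> \<omega> \<in> I \<pi>}"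
proof (rule measure_rectangle_eq_of_char_eq)
  have Z_meas: "\<forall>\<pi>\<in>P. Z \<pi> \<in> borel_measurable N"
    and Z_lin: "\<forall>a. real_gaussian N (\<lambda>\<omega>. \<Sum>\<pi>\<in>P. a \<pi> * Z \<pi> \<omega>)"
    and Z_mean: "\<forall>\<pi>\<in>P. integrable N (Z \<pi>) \<and> integral\<^sup>L N (Z \<pi>) = 0"
    using Z unfolding centered_unit_gaussian_vector_def by auto
  show "finite K" using K P by (rule finite_subset)
  show "finite_measure N" using N by (simp add: prob_space_def)
  show "\<forall>\<pi>\<in>K. (\<lambda>\<omega>. - Z \<pi> \<omega>) \<in> borel_measurable N" "\<forall>\<pi>\<in>K. Z \<pi> \<in> borel_measurable N"
    using Z_meas K by auto
  show "\<forall>a. (\<integral>\<omega>. iexp (\<Sum>\<pi>\<in>K. a \<pi> * - Z \<pi> \<omega>) \<partial>N) = (\<integral>\<omega>. iexp (\<Sum>\<pi>\<in>K. a \<pi> * Z \<pi> \<omega>) \<partial>N)"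
  proof
    fix a :: "'b \<Rightarrow> real"
    define W where "W \<omega> = (\<Sum>\<pi>\<in>K. a \<pi> * Z \<pi> \<omega>)" for \<omega>
    have "W = (\<lambda>\<omega>. \<Sum>\<pi>\<in>P. (if \<pi> \<in> K then a \<pi> else 0) * Z \<pi> \<omega>)"
      unfolding W_def using K P by (auto intro!: sum.mono_neutral_cong_left)
    then have "real_gaussian N W" using Z_lin by simp
    moreover have "integral\<^sup>L N W = 0"
      unfolding W_def using Z_mean K by (subst Bochner_Integration.integral_sum) (auto intro!: sum.neutral)
    ultimately have "(\<integral>\<omega>. iexp (- W \<omega>) \<partial>N) = (\<integral>\<omega>. iexp (W \<omega>) \<partial>N)"
      by (rule integral_iexp_uminus_centered_real_gaussian[OF N])
    then show "(\<integral>\<omega>. iexp (\<Sum>\<pi>\<in>K. a \<pi> * - Z \<pi> \<omega>) \<partial>N) = (\<integral>\<omega>. iexp (\<Sum>\<pi>\<in>K. a \<pi> * Z \<pi> \<omega>) \<partial>N)"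
      unfolding W_def by (simp add: sum_negf)
  qed
qed (use N I in \<open>simp_all add: prob_space_def\<close>)

lemma measure_le_quantile_ge:
  assumes N: "prob_space N" and [measurable]: "X \<in> borel_measurable N" and "0 < \<tau>" "\<tau> < 1"
  shows "\<tau> \<le> measure N {\<omega>\<in>space N. X \<omega> \<le> quantile N X \<tau>}"
proof -
  define \<mu> where "\<mu> = distr N borel X"
  have \<mu>: "real_distribution \<mu>" unfolding \<mu>_def
    by (rule prob_space.real_distribution_distr[OF N]) simp
  then have fb: "finite_borel_measure \<mu>" by (rule real_distribution.finite_borel_measure_M)
  define F where "F = cdf \<mu>"
  have F: "F x = measure N {\<omega>\<in>space N. X \<omega> \<le> x}" for x
    unfolding F_def cdf_def \<mu>_def
    by (subst measure_distr) (auto intro!: arg_cong[where f="measure N"])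
  define S where "S = {x. \<tau> \<le> F x}"
  have mono: "F x \<le> F y" if "x \<le> y" for x y
    unfolding F_def using finite_borel_measure.cdf_nondecreasing[OF fb that] .
  have "eventually (\<lambda>x. F x > \<tau>) at_top"
    using order_tendstoD(1)[OF real_distribution.cdf_lim_at_top_prob[OF \<mu>] \<open>\<tau> < 1\<close>] unfolding F_def .
  then obtain x0 where "\<forall>x\<ge>x0. F x > \<tau>" by (auto simp: eventually_at_top_linorder)
  then have "S \<noteq> {}" unfolding S_def by (auto intro!: exI[of _ x0] less_imp_le)
  have "eventually (\<lambda>x. F x < \<tau>) at_bot"
    using order_tendstoD(2)[OF finite_borel_measure.cdf_lim_at_bot[OF fb] \<open>0 < \<tau>\<close>] unfolding F_def .
  then obtain b where "\<forall>x\<le>b. F x < \<tau>" by (auto simp: eventually_at_bot_linorder)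
  then have "bdd_below S"
    unfolding bdd_below_def S_def by (metis linorder_not_le mem_Collect_eq order_less_imp_le)
  \<comment> \<open>Right-continuity of the distribution function makes the infimum attained.\<close>
  have "eventually (\<lambda>x. \<tau> \<le> F x) (at_right (Inf S))"
    using eventually_at_right_less
  proof (rule eventually_mono)
    fix x assume "Inf S < x"
    then obtain y where "y \<in> S" "y < x"
      using cInf_less_iff[OF \<open>S \<noteq> {}\<close> \<open>bdd_below S\<close>] by auto
    then show "\<tau> \<le> F x" using mono[of y x] unfolding S_def by auto
  qed
  moreover have "(F \<longlongrightarrow> F (Inf S)) (at_right (Inf S))"
    using finite_borel_measure.cdf_is_right_cont[OF fb, of "Inf S"] unfolding F_def continuous_within .
  ultimately have "\<tau> \<le> F (Inf S)"
    by (intro tendsto_lowerbound) auto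
  then show ?thesis unfolding quantile_def F S_def .
qed

lemma measure_all_le_qmax_ge:
  assumes "prob_space N" and "finite K" "K \<noteq> {}" and "\<forall>\<pi>\<in>K. Z \<pi> \<in> borel_measurable N"
    and "0 < \<tau>" "\<tau> < 1"
  shows "\<tau> \<le> measure N {\<omega>\<in>space N. \<forall>\<pi>\<in>K. Z \<pi> \<omega> \<le> qmax N Z \<tau> K}"
proof -
  have "(\<lambda>\<omega>. Max ((\<lambda>\<pi>. Z \<pi> \<omega>) ` K)) \<in> borel_measurable N"
    using assms by (intro borel_measurable_Max) auto
  then have "\<tau> \<le> measure N {\<omega>\<in>space N. Max ((\<lambda>\<pi>. Z \<pi> \<omega>) ` K) \<le> qmax N Z \<tau> K}"
    unfolding qmax_def using assms by (intro measure_le_quantile_ge) auto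
  then show ?thesis using assms by simp
qed

lemma condition_G_measure_ge:
  assumes G: "condition_G M Zh N Z P r" and "K \<subseteq> P" and "\<forall>\<pi>\<in>K. is_interval (I \<pi>)"
  shows "measure N {\<omega>\<in>space N. \<forall>\<pi>\<in>K. Z \<pi> \<omega> \<in> I \<pi>} - r \<le> measure M {\<omega>\<in>space M. \<forall>\<pi>\<in>K. Zh \<pi> \<omega> \<in> I \<pi>}"
proof -
  define J where "J \<pi> = (if \<pi> \<in> K then I \<pi> else UNIV)" for \<pi>
  have "\<forall>\<pi>\<in>P. is_interval (J \<pi>)"
    using assms(3) by (simp add: J_def is_interval_univ)
  moreover have "(\<forall>\<pi>\<in>P. f \<pi> \<in> J \<pi>) \<longleftrightarrow> (\<forall>\<pi>\<in>K. f \<pi> \<in> I \<pi>)" for f :: "_ \<Rightarrow> real"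
    using assms(2) by (auto simp: J_def)
  ultimately show ?thesis
    using G unfolding condition_G_def by (force simp: abs_le_iff)
qed

lemma (in prob_space) prob_Int_ge:
  assumes "A \<in> events" "B \<in> events"
  shows "prob A + prob B - 1 \<le> prob (A \<inter> B)"
  using assms finite_measure_Union'[of A B] finite_measure_Diff'[of B A] prob_le_1[of "A \<union> B"]
  by (simp add: Int_commute)

lemma condition_G_measure_all_le_qmax_ge:
  assumes N: "prob_space N" and G: "condition_G M Zh N Z P r"
    and K: "finite K" "K \<noteq> {}" "K \<subseteq> P" and Z: "\<forall>\<pi>\<in>K. Z \<pi> \<in> borel_measurable N"
    and \<tau>: "0 < \<tau>" "\<tau> < 1"
  shows "\<tau> - r \<le> measure M {\<omega>\<in>space M. \<forall>\<pi>\<in>K. Zh \<pi> \<omega> \<le> qmax N Z \<tau> K}"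
  using measure_all_le_qmax_ge[OF N K(1,2) Z \<tau>]
    condition_G_measure_ge[OF G K(3), of "\<lambda>_. {..qmax N Z \<tau> K}"]
  by (simp add: is_interval_ic)

lemma condition_G_measure_all_ge_uminus_qmax_ge:
  assumes N: "prob_space N" and Z: "centered_unit_gaussian_vector N P Z" and P: "finite P"
    and G: "condition_G M Zh N Z P r" and K: "K \<noteq> {}" "K \<subseteq> P" and \<tau>: "0 < \<tau>" "\<tau> < 1"
  shows "\<tau> - r \<le> measure M {\<omega>\<in>space M. \<forall>\<pi>\<in>K. - qmax N Z \<tau> K \<le> Zh \<pi> \<omega>}"
proof -
  have "\<forall>\<pi>\<in>K. Z \<pi> \<in> borel_measurable N"
    using Z K unfolding centered_unit_gaussian_vector_def by auto
  then have "\<tau> \<le> measure N {\<omega>\<in>space N. \<forall>\<pi>\<in>K. Z \<pi> \<omega> \<in> {..qmax N Z \<tau> K}}"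
    using measure_all_le_qmax_ge[OF N finite_subset[OF K(2) P] K(1) _ \<tau>] by simp
  also have "\<dots> = measure N {\<omega>\<in>space N. \<forall>\<pi>\<in>K. Z \<pi> \<omega> \<in> {- qmax N Z \<tau> K..}}"
    using measure_rectangle_uminus_centered_unit_gaussian_vector[OF N Z P K(2), of "\<lambda>_. {..qmax N Z \<tau> K}"]
    by (simp add: minus_le_iff)
  finally show ?thesis
    using condition_G_measure_ge[OF G K(2), of "\<lambda>_. {- qmax N Z \<tau> K..}"]
    by (simp add: is_interval_ci)
qed

lemma condition_G_event_errors_within_qmax:
  assumes M: "prob_space M" and N: "prob_space N" and Z: "centered_unit_gaussian_vector N P Z"
    and P: "finite P" "P \<noteq> {}" and P0: "P0 \<subseteq> P" "P0 \<noteq> {}"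
    and Zh: "\<forall>\<pi>\<in>P. Zh \<pi> \<in> borel_measurable M" and G: "condition_G M Zh N Z P r"
    and \<beta>: "0 < \<beta>" "\<beta> < 1"
  shows "\<exists>E\<in>sets M. 1 - 2 * \<beta> - 2 * r \<le> measure M E \<and>
    (\<forall>\<omega>\<in>E. (\<forall>\<pi>\<in>P0. - qmax N Z (1 - \<beta>) P0 \<le> Zh \<pi> \<omega>) \<and> (\<forall>\<pi>\<in>P. Zh \<pi> \<omega> \<le> qmax N Z (1 - \<beta>) P))"
proof -
  define E_low where "E_low = {\<omega>\<in>space M. \<forall>\<pi>\<in>P0. - qmax N Z (1 - \<beta>) P0 \<le> Zh \<pi> \<omega>}"
  define E_up where "E_up = {\<omega>\<in>space M. \<forall>\<pi>\<in>P. Zh \<pi> \<omega> \<le> qmax N Z (1 - \<beta>) P}"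
  have half_lines: "{\<omega>\<in>space M. a \<le> Zh \<pi> \<omega>} \<in> sets M" "{\<omega>\<in>space M. Zh \<pi> \<omega> \<le> a} \<in> sets M"
    if "\<pi> \<in> P" for \<pi> a
  proof -
    have [measurable]: "Zh \<pi> \<in> borel_measurable M" using Zh that by simp
    show "{\<omega>\<in>space M. a \<le> Zh \<pi> \<omega>} \<in> sets M" "{\<omega>\<in>space M. Zh \<pi> \<omega> \<le> a} \<in> sets M"
      by measurable
  qed
  have events: "E_low \<in> sets M" "E_up \<in> sets M"
    unfolding E_low_def E_up_def using P(1) finite_subset[OF P0(1) P(1)] P0(1)
    by (auto intro!: sets.sets_Collect_finite_All half_lines)
  have "1 - \<beta> - r \<le> measure M E_low"
    unfolding E_low_def using \<beta>
    by (intro condition_G_measure_all_ge_uminus_qmax_ge[OF N Z P(1) G P0(2,1)]) auto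
  moreover have "1 - \<beta> - r \<le> measure M E_up"
    unfolding E_up_def using Z \<beta>
    by (intro condition_G_measure_all_le_qmax_ge[OF N G P]) (auto simp: centered_unit_gaussian_vector_def)
  ultimately have "1 - 2 * \<beta> - 2 * r \<le> measure M (E_low \<inter> E_up)"
    using prob_space.prob_Int_ge[OF M events] by linarith
  then show ?thesis
    using events by (intro bexI[of _ "E_low \<inter> E_up"]) (auto simp: E_low_def E_up_def)
qed

lemma regret_le_of_normalized_error_bounds:
  fixes V Vhat s :: "'p \<Rightarrow> real"
  assumes P: "finite P" "P0 \<subseteq> P" "P0 \<noteq> {}" "\<pi> \<in> P" and s: "\<forall>\<pi>'\<in>P. 0 < s \<pi>'"
    and optimal: "\<forall>\<pi>'\<in>P0. V \<pi>' = Vmax"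
    and lower: "\<forall>\<pi>'\<in>P0. - q\<^sub>0 \<le> (Vhat \<pi>' - V \<pi>') / s \<pi>'"
    and upper: "(Vhat \<pi> - V \<pi>) / s \<pi> \<le> q"
    and argmax: "\<forall>\<pi>'\<in>P. Vhat \<pi>' - k * s \<pi>' \<le> Vhat \<pi> - k * s \<pi>"
  shows "Vmax - V \<pi> \<le> Min (s ` P0) * (q\<^sub>0 + k) + Max (s ` P) * max (q - k) 0"
proof -
  have "Min (s ` P0) \<in> s ` P0"
    using P finite_subset by (intro Min_in) auto
  then obtain \<pi>\<^sub>0 where \<pi>\<^sub>0: "\<pi>\<^sub>0 \<in> P0" "s \<pi>\<^sub>0 = Min (s ` P0)" by auto
  have s0: "0 < s \<pi>\<^sub>0" and s1: "0 < s \<pi>" using \<pi>\<^sub>0(1) P s by auto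
  have "- q\<^sub>0 * s \<pi>\<^sub>0 \<le> Vhat \<pi>\<^sub>0 - Vmax"
    using lower[rule_format, OF \<pi>\<^sub>0(1)] optimal \<pi>\<^sub>0(1) s0 by (simp add: pos_le_divide_eq)
  moreover have "Vhat \<pi> - V \<pi> \<le> q * s \<pi>"
    using upper s1 by (simp add: pos_divide_le_eq)
  moreover have "Vhat \<pi>\<^sub>0 - k * s \<pi>\<^sub>0 \<le> Vhat \<pi> - k * s \<pi>"
    using argmax \<pi>\<^sub>0(1) P by auto
  ultimately have "Vmax - V \<pi> \<le> s \<pi>\<^sub>0 * (q\<^sub>0 + k) + s \<pi> * (q - k)"
    by (simp add: algebra_simps)
  moreover have "s \<pi> * (q - k) \<le> s \<pi> * max (q - k) 0"
    using s1 by (intro mult_left_mono) auto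
  moreover have "s \<pi> * max (q - k) 0 \<le> Max (s ` P) * max (q - k) 0"
    using P by (intro mult_right_mono) auto
  ultimately show ?thesis unfolding \<pi>\<^sub>0(2)[symmetric] by linarith
qed

theorem proposition1:
  fixes M :: "'a measure" and N :: "'b measure"
    and P :: "'p set" and n :: nat and V :: "'p \<Rightarrow> real"
    and Vhat shat :: "'p \<Rightarrow> 'a \<Rightarrow> real" and Z :: "'p \<Rightarrow> 'b \<Rightarrow> real"
    and r \<beta> :: real and khat :: "'a \<Rightarrow> real" and pihat :: "'a \<Rightarrow> 'p"
  assumes M: "prob_space M" and N: "prob_space N"
    and P: "finite P" "P \<noteq> {}" and n: "n > 0"
    and Vhat_meas: "\<forall>\<pi>\<in>P. Vhat \<pi> \<in> borel_measurable M"
    and shat_meas: "\<forall>\<pi>\<in>P. shat \<pi> \<in> borel_measurable M"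
    and shat_pos: "\<forall>\<pi>\<in>P. \<forall>\<omega>\<in>space M. shat \<pi> \<omega> > 0"
    and Zgauss: "centered_unit_gaussian_vector N P Z"
    and r: "r \<ge> 0"
    and G: "condition_G M (\<lambda>\<pi> \<omega>. (Vhat \<pi> \<omega> - V \<pi>) / shat \<pi> \<omega>) N Z P r"
    and \<beta>: "0 < \<beta>" "\<beta> < 1"
    and khat: "\<forall>\<omega>\<in>space M. khat \<omega> \<ge> 0"
    and pihat_in: "\<forall>\<omega>\<in>space M. pihat \<omega> \<in> P"
    and pihat_argmax: "\<forall>\<omega>\<in>space M. \<forall>\<pi>\<in>P.
        Vhat \<pi> \<omega> - khat \<omega> * shat \<pi> \<omega> \<le> Vhat (pihat \<omega>) \<omega> - khat \<omega> * shat (pihat \<omega>) \<omega>"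
  shows "\<exists>E\<in>sets M. measure M E \<ge> 1 - 2 * \<beta> - 2 * r \<and>
     (\<forall>\<omega>\<in>E.
        (let Vmax = Max (V ` P);
             P0 = {\<pi>\<in>P. V \<pi> = Vmax};
             sig_bar = sqrt (real n) * Max ((\<lambda>\<pi>. shat \<pi> \<omega>) ` P);
             sig_low = sqrt (real n) * Min ((\<lambda>\<pi>. shat \<pi> \<omega>) ` P0)
         in Vmax - V (pihat \<omega>) \<le>
              sig_low / sqrt (real n) * (qmax N Z (1 - \<beta>) P0 + khat \<omega>)
              + sig_bar / sqrt (real n) * max (qmax N Z (1 - \<beta>) P - khat \<omega>) 0))"
proof -
  define Zh where "Zh \<pi> \<omega> = (Vhat \<pi> \<omega> - V \<pi>) / shat \<pi> \<omega>" for \<pi> \<omega>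
  define P0 where "P0 = {\<pi>\<in>P. V \<pi> = Max (V ` P)}"
  have "Max (V ` P) \<in> V ` P" using P by simp
  then have P0: "P0 \<subseteq> P" "P0 \<noteq> {}" by (auto simp: P0_def)
  have "\<forall>\<pi>\<in>P. Zh \<pi> \<in> borel_measurable M"
    unfolding Zh_def using Vhat_meas shat_meas by (auto intro!: borel_measurable_divide borel_measurable_diff)
  then obtain E where E: "E \<in> sets M" "1 - 2 * \<beta> - 2 * r \<le> measure M E"
    and lower: "\<forall>\<omega>\<in>E. \<forall>\<pi>\<in>P0. - qmax N Z (1 - \<beta>) P0 \<le> Zh \<pi> \<omega>"
    and upper: "\<forall>\<omega>\<in>E. \<forall>\<pi>\<in>P. Zh \<pi> \<omega> \<le> qmax N Z (1 - \<beta>) P"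
    using condition_G_event_errors_within_qmax[OF M N Zgauss P P0 _ G[folded Zh_def] \<beta>] by blast
  have "Max (V ` P) - V (pihat \<omega>) \<le>
      Min ((\<lambda>\<pi>. shat \<pi> \<omega>) ` P0) * (qmax N Z (1 - \<beta>) P0 + khat \<omega>)
      + Max ((\<lambda>\<pi>. shat \<pi> \<omega>) ` P) * max (qmax N Z (1 - \<beta>) P - khat \<omega>) 0"
    if "\<omega> \<in> E" for \<omega>
  proof -
    have "\<omega> \<in> space M" using sets.sets_into_space[OF E(1)] that by auto
    then show ?thesis
      using that lower upper P P0 pihat_in pihat_argmax shat_pos
      by (intro regret_le_of_normalized_error_bounds[where Vhat="\<lambda>\<pi>. Vhat \<pi> \<omega>"])
        (auto simp: Zh_def P0_def)
  qed
  then show ?thesis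
    using E n unfolding Let_def P0_def[symmetric] by auto
qed

end
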